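(* Consider the two-layer system $$\dot{\mathbf{q}}=\mathbf{f}_0(\mathbf{q})+\mathbf{g}_0(\mathbf{q})\boldsymbol{\xi},\qquad \dot{\boldsymbol{\xi}}=\mathbf{f}_1(\mathbf{q},\boldsymbol{\xi})+\mathbf{g}_1(\mathbf{q},\boldsymbol{\xi})\mathbf{u},$$ with $\mathbf{q}\in\mathbb{R}^n$, $\boldsymbol{\xi}\in\mathbb{R}^p$, $\mathbf{u}\in\mathbb{R}^m$ and locally Lipschitz $\mathbf{f}_0,\mathbf{g}_0,\mathbf{f}_1,\mathbf{g}_1$. Let $h_0:\mathbb{R}^n\to\mathbb{R}$ be continuously differentiable, with $\mathcal{C}_0=\{\mathbf{q}:h_0(\mathbf{q})\ge0\}$. Suppose there exist a continuously differentiable $\mathbf{k}_0:\mathbb{R}^n\to\mathbb{R}^p$ and constants $\alpha,\varepsilon>0$ such that for all $\mathbf{q}$ $$L_{\mathbf{f}_0}h_0(\mathbf{q})+L_{\mathbf{g}_0}h_0(\mathbf{q})\mathbf{k}_0(\mathbf{q})\ge-\alpha h_0(\mathbf{q})+\tfrac{1}{\varepsilon}\|L_{\mathbf{g}_0}h_0(\mathbf{q})\|^2.$$ Suppose further there exist a tracking controller $\mathbf{k}:\mathbb{R}^n\times\mathbb{R}^p\to\mathbb{R}^m$, a continuously differentiable $V:\mathbb{R}^n\times\mathbb{R}^p\to\mathbb{R}_{\ge0}$ and constants $\gamma_1,\gamma_2,\gamma,\delta>0$ such that for all $(\mathbf{q},\boldsymbol{\xi})$: $\gamma_1\|\boldsymbol{\xi}-\mathbf{k}_0(\mathbf{q})\|^2\le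 V(\mathbf{q},\boldsymbol{\xi})\le\gamma_2\|\boldsymbol{\xi}-\mathbf{k}_0(\mathbf{q})\|^2$ and $\dot V(\mathbf{q},\boldsymbol{\xi})\le-\gamma V(\mathbf{q},\boldsymbol{\xi})+\delta$ along the closed-loop system with $\mathbf{u}=\mathbf{k}(\mathbf{q},\boldsymbol{\xi})$. Let $\mu>0$, $$h(\mathbf{q},\boldsymbol{\xi})=h_0(\mathbf{q})-\frac{1}{\mu\gamma_1}\Big(V(\mathbf{q},\boldsymbol{\xi})-\frac{\delta}{\alpha}\Big),\qquad \mathcal{C}=\{(\mathbf{q},\boldsymbol{\xi}):h(\mathbf{q},\boldsymbol{\xi})\ge0\}.$$ If $\gamma\ge\alpha+\frac{\varepsilon\mu}{4}$, then $\mathcal{C}$ is forward invariant for the closed-loop system with $\mathbf{u}=\mathbf{k}(\mathbf{q},\boldsymbol{\xi})$.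
   Context: $L_{\mathbf{f}_0}h_0=\nabla h_0\cdot\mathbf{f}_0$, $L_{\mathbf{g}_0}h_0=\nabla h_0^\top\mathbf{g}_0$; $\dot V$ denotes the derivative of $V$ along the closed-loop vector field. A set is forward invariant if every closed-loop trajectory starting in it remains in it on its maximal interval of existence. *)

theory Defs
  imports "HOL-Analysis.Analysis"
begin

definition locally_lipschitz :: "('a::metric_space \<Rightarrow> 'b::metric_space) \<Rightarrow> bool" where
  "locally_lipschitz f \<longleftrightarrow> (\<forall>x. \<exists>e>0. \<exists>L. L-lipschitz_on (ball x e) f)"

definition C1_fun :: "('a::real_normed_vector \<Rightarrow> 'b::real_normed_vector) \<Rightarrow> bool" where
  "C1_fun f \<longleftrightarrow> (\<exists>D. (\<forall>x. (f has_derivative blinfun_apply (D x)) (at x)) \<and> continuous_on UNIV D)"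

definition lie_g :: "((real^'n) \<Rightarrow> ((real^'n) \<Rightarrow>\<^sub>L real)) \<Rightarrow> (real^'n \<Rightarrow> real^'p^'n) \<Rightarrow> real^'n \<Rightarrow> real^'p" where
  "lie_g Dh g q = (\<chi> j. blinfun_apply (Dh q) (column j (g q)))"

definition closed_loop ::
  "(real^'n \<Rightarrow> real^'n) \<Rightarrow> (real^'n \<Rightarrow> real^'p^'n) \<Rightarrow>
   (real^'n \<Rightarrow> real^'p \<Rightarrow> real^'p) \<Rightarrow> (real^'n \<Rightarrow> real^'p \<Rightarrow> real^'m^'p) \<Rightarrow>
   (real^'n \<Rightarrow> real^'p \<Rightarrow> real^'m) \<Rightarrow> (real^'n) \<times> (real^'p) \<Rightarrow> (real^'n) \<times> (real^'p)" where
  "closed_loop f0 g0 f1 g1 k = (\<lambda>(q, xi). (f0 q + g0 q *v xi, f1 q xi + g1 q xi *v k q xi))"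

text \<open>Since any solution extends to a maximal one, quantifying over all
  solutions on all intervals [0,T) is the same as quantifying over maximal solutions.\<close>
definition forward_invariant :: "('a::real_normed_vector \<Rightarrow> 'a) \<Rightarrow> 'a set \<Rightarrow> bool" where
  "forward_invariant F S \<longleftrightarrow>
     (\<forall>(x::real \<Rightarrow> 'a) (T::real). 0 < T \<longrightarrow>
        (\<forall>t\<in>{0..<T}. (x has_vector_derivative F (x t)) (at t within {0..<T})) \<longrightarrow>
        x 0 \<in> S \<longrightarrow> (\<forall>t\<in>{0..<T}. x t \<in> S))"

end

theory Submission imports Defs begin

text \<open>The composite function h(q,\<xi>) is a control barrier function for the closed loop with
  the uniform decay rate \<alpha>: the cross term L_g h0 (\<xi> - k0 q) introduced by the tracking error
  is absorbed, via Young's inequality, by the margin \<epsilon>\<parallel>L_g h0\<parallel>^2 of the nominal barrier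
  condition and by the excess decay (\<gamma> - \<alpha>) V \<ge> (\<epsilon>\<mu>/4) \<gamma>1 \<parallel>\<xi> - k0 q\<parallel>^2 of V. Hence
  h' \<ge> -\<alpha> h along every trajectory, and e^{\<alpha>t} h(x(t)) is nondecreasing.\<close>

lemma lie_g_inner:
  fixes Dh :: "(real^'n) \<Rightarrow> ((real^'n) \<Rightarrow>\<^sub>L real)" and g :: "real^'n \<Rightarrow> real^'p^'n"
  shows "blinfun_apply (Dh q) (g q *v xi) = lie_g Dh g q \<bullet> xi"
proof -
  have "blinfun_apply (Dh q) (g q *v xi) = (\<Sum>j\<in>UNIV. xi $ j * blinfun_apply (Dh q) (column j (g q)))"
    by (simp add: matrix_mult_sum scalar_mult_eq_scaleR blinfun.sum_right blinfun.scaleR_right)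
  also have "\<dots> = lie_g Dh g q \<bullet> xi"
    by (simp add: lie_g_def inner_vec_def mult.commute)
  finally show ?thesis .
qed

lemma young_ineq_eps:
  fixes a b \<epsilon> :: real
  assumes "\<epsilon> > 0"
  shows "a * b \<le> a\<^sup>2 / \<epsilon> + \<epsilon> * b\<^sup>2 / 4"
proof -
  have "a\<^sup>2 / \<epsilon> + \<epsilon> * b\<^sup>2 / 4 - a * b = (a - \<epsilon> * b / 2)\<^sup>2 / \<epsilon>"
    using assms by (simp add: field_simps power2_eq_square)
  also have "\<dots> \<ge> 0"
    using assms by simp
  finally show ?thesis by simp
qed

lemma composite_barrier_ineq:
  fixes h0 h0_dot e V V_dot n m \<alpha> \<epsilon> \<gamma>1 \<gamma> \<delta> \<mu> :: real
  assumes h0_dot: "h0_dot \<ge> - \<alpha> * h0 + (1 / \<epsilon>) * n\<^sup>2"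
    and V_dot: "V_dot \<le> - \<gamma> * V + \<delta>"
    and cross: "e \<ge> - (n * m)"
    and V_lower: "\<gamma>1 * m\<^sup>2 \<le> V"
    and gamma_ge: "\<gamma> \<ge> \<alpha> + \<epsilon> * \<mu> / 4"
    and pos: "\<alpha> > 0" "\<epsilon> > 0" "\<gamma>1 > 0" "\<mu> > 0"
  shows "h0_dot + e - V_dot / (\<mu> * \<gamma>1) \<ge> - \<alpha> * (h0 - (V - \<delta> / \<alpha>) / (\<mu> * \<gamma>1))"
proof -
  define c where "c = 1 / (\<mu> * \<gamma>1)"
  have c_pos: "c > 0"
    using pos by (simp add: c_def)
  have "0 \<le> \<epsilon> * \<mu> / 4" "0 \<le> \<gamma>1 * m\<^sup>2"
    using pos by simp_all
  then have "(\<epsilon> * \<mu> / 4) * (\<gamma>1 * m\<^sup>2) \<le> (\<gamma> - \<alpha>) * V"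
    using gamma_ge V_lower by (intro mult_mono) linarith+
  then have excess_decay: "\<epsilon> * m\<^sup>2 / 4 \<le> c * (\<gamma> - \<alpha>) * V"
    using c_pos pos by (simp add: c_def field_simps)
  have "c * V_dot \<le> c * (- \<gamma> * V + \<delta>)"
    using V_dot c_pos by (simp add: mult_left_mono)
  moreover have "n * m \<le> n\<^sup>2 / \<epsilon> + \<epsilon> * m\<^sup>2 / 4"
    using pos(2) by (rule young_ineq_eps)
  ultimately have "h0_dot + e - c * V_dot \<ge> - \<alpha> * (h0 - c * (V - \<delta> / \<alpha>))"
    using h0_dot cross excess_decay pos(1) by (simp add: algebra_simps)
  then show ?thesis
    by (simp add: c_def)
qed

lemma nonneg_if_deriv_ge_neg_linear:
  fixes \<phi> \<phi>' :: "real \<Rightarrow> real" and \<alpha> t :: real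
  assumes "0 \<le> t"
    and deriv: "\<And>s. s \<in> {0..t} \<Longrightarrow> (\<phi> has_real_derivative \<phi>' s) (at s within {0..t})"
    and deriv_ge: "\<And>s. s \<in> {0..t} \<Longrightarrow> \<phi>' s \<ge> - \<alpha> * \<phi> s"
    and "\<phi> 0 \<ge> 0"
  shows "\<phi> t \<ge> 0"
proof -
  define G where "G s = exp (\<alpha> * s) * \<phi> s" for s
  define G' where "G' s = exp (\<alpha> * s) * (\<phi>' s + \<alpha> * \<phi> s)" for s
  have "(G has_real_derivative G' s) (at s within {0..t})" if "s \<in> {0..t}" for s
    unfolding G_def[abs_def] G'_def
    by (rule derivative_eq_intros deriv[OF that] refl | simp add: algebra_simps)+
  then obtain s where "s \<in> {0..t}" "G t - G 0 = G' s * (t - 0)"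
    using mvt_very_simple[OF \<open>0 \<le> t\<close>, of G "\<lambda>s. (*) (G' s)"]
    by (auto simp: has_field_derivative_def)
  moreover have "G' s \<ge> 0"
    using deriv_ge[OF \<open>s \<in> {0..t}\<close>] by (simp add: G'_def)
  ultimately have "G t \<ge> G 0"
    using \<open>0 \<le> t\<close> by (metis diff_ge_0_iff_ge zero_le_mult_iff)
  with \<open>\<phi> 0 \<ge> 0\<close> have "exp (\<alpha> * t) * \<phi> t \<ge> 0"
    by (simp add: G_def)
  then show ?thesis
    by (simp add: zero_le_mult_iff)
qed

lemma forward_invariant_superlevel_set:
  fixes F :: "'a::real_normed_vector \<Rightarrow> 'a" and h :: "'a \<Rightarrow> real"
  assumes h_deriv: "\<And>z. (h has_derivative Dh z) (at z)"
    and barrier: "\<And>z. Dh z (F z) \<ge> - \<alpha> * h z"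
  shows "forward_invariant F {z. h z \<ge> 0}"
  unfolding forward_invariant_def
proof (intro allI impI ballI)
  fix x :: "real \<Rightarrow> 'a" and T t :: real
  assume x_deriv: "\<forall>s\<in>{0..<T}. (x has_vector_derivative F (x s)) (at s within {0..<T})"
    and "x 0 \<in> {z. h z \<ge> 0}" and "t \<in> {0..<T}"
  have "0 \<le> t"
    using \<open>t \<in> {0..<T}\<close> by simp
  moreover have "((h \<circ> x) has_real_derivative Dh (x s) (F (x s))) (at s within {0..t})"
    if "s \<in> {0..t}" for s
  proof -
    have "{0..t} \<subseteq> {0..<T}"
      using \<open>t \<in> {0..<T}\<close> by auto
    with x_deriv that have "(x has_vector_derivative F (x s)) (at s within {0..t})"
      by (blast intro: has_vector_derivative_within_subset)
    then show ?thesis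
      unfolding has_real_derivative_iff_has_vector_derivative
      by (rule vector_derivative_diff_chain_within[OF _ has_derivative_at_withinI[OF h_deriv]])
  qed
  moreover have "Dh (x s) (F (x s)) \<ge> - \<alpha> * (h \<circ> x) s" if "s \<in> {0..t}" for s
    using barrier by simp
  moreover have "(h \<circ> x) 0 \<ge> 0"
    using \<open>x 0 \<in> {z. h z \<ge> 0}\<close> by simp
  ultimately have "(h \<circ> x) t \<ge> 0"
    by (rule nonneg_if_deriv_ge_neg_linear)
  then show "x t \<in> {z. h z \<ge> 0}"
    by simp
qed

theorem theorem13:
  fixes f0 :: "real^'n \<Rightarrow> real^'n" and g0 :: "real^'n \<Rightarrow> real^'p^'n"
    and f1 :: "real^'n \<Rightarrow> real^'p \<Rightarrow> real^'p" and g1 :: "real^'n \<Rightarrow> real^'p \<Rightarrow> real^'m^'p"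
    and h0 :: "real^'n \<Rightarrow> real" and Dh0 :: "(real^'n) \<Rightarrow> ((real^'n) \<Rightarrow>\<^sub>L real)"
    and k0 :: "real^'n \<Rightarrow> real^'p"
    and k :: "real^'n \<Rightarrow> real^'p \<Rightarrow> real^'m"
    and V :: "real^'n \<Rightarrow> real^'p \<Rightarrow> real"
    and DV :: "((real^'n) \<times> (real^'p)) \<Rightarrow> (((real^'n) \<times> (real^'p)) \<Rightarrow>\<^sub>L real)"
    and \<alpha> \<epsilon> \<gamma>1 \<gamma>2 \<gamma> \<delta> \<mu> :: real
  assumes lip: "locally_lipschitz f0" "locally_lipschitz g0"
      "locally_lipschitz (\<lambda>(q, xi). f1 q xi)" "locally_lipschitz (\<lambda>(q, xi). g1 q xi)"
    and h0_deriv: "\<And>q. (h0 has_derivative blinfun_apply (Dh0 q)) (at q)"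
    and h0_C1: "continuous_on UNIV Dh0"
    and k0_C1: "C1_fun k0"
    and pos: "\<alpha> > 0" "\<epsilon> > 0"
    and cbf: "\<And>q. blinfun_apply (Dh0 q) (f0 q) + lie_g Dh0 g0 q \<bullet> k0 q
                 \<ge> - \<alpha> * h0 q + (1 / \<epsilon>) * (norm (lie_g Dh0 g0 q))\<^sup>2"
    and V_deriv: "\<And>x. ((\<lambda>(q, xi). V q xi) has_derivative blinfun_apply (DV x)) (at x)"
    and V_C1: "continuous_on UNIV DV"
    and V_nonneg: "\<And>q xi. V q xi \<ge> 0"
    and gpos: "\<gamma>1 > 0" "\<gamma>2 > 0" "\<gamma> > 0" "\<delta> > 0"
    and V_bounds: "\<And>q xi. \<gamma>1 * (norm (xi - k0 q))\<^sup>2 \<le> V q xi"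
                  "\<And>q xi. V q xi \<le> \<gamma>2 * (norm (xi - k0 q))\<^sup>2"
    and V_dot: "\<And>q xi. blinfun_apply (DV (q, xi)) (closed_loop f0 g0 f1 g1 k (q, xi))
                   \<le> - \<gamma> * V q xi + \<delta>"
    and mu: "\<mu> > 0"
    and gamma_ge: "\<gamma> \<ge> \<alpha> + \<epsilon> * \<mu> / 4"
  shows "forward_invariant (closed_loop f0 g0 f1 g1 k)
           {(q, xi). h0 q - (1 / (\<mu> * \<gamma>1)) * (V q xi - \<delta> / \<alpha>) \<ge> 0}"
proof -
  define F where "F = closed_loop f0 g0 f1 g1 k"
  define h where "h z = h0 (fst z) - (V (fst z) (snd z) - \<delta> / \<alpha>) / (\<mu> * \<gamma>1)" for z
  define Dh where "Dh z v = Dh0 (fst z) (fst v) - DV z v / (\<mu> * \<gamma>1)" for z v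
  have "(h has_derivative Dh z) (at z)" for z
  proof -
    have "((\<lambda>z. h0 (fst z)) has_derivative (\<lambda>v. Dh0 (fst z) (fst v))) (at z)"
      using has_derivative_fst[OF has_derivative_ident] h0_deriv by (rule has_derivative_compose)
    moreover have "((\<lambda>z. V (fst z) (snd z)) has_derivative DV z) (at z)"
      using V_deriv[of z] by (simp add: case_prod_beta')
    ultimately show ?thesis
      unfolding h_def[abs_def] Dh_def[abs_def]
      using mu gpos(1) by (intro derivative_eq_intros) auto
  qed
  moreover have "Dh z (F z) \<ge> - \<alpha> * h z" for z
  proof (cases z)
    case (Pair q xi)
    let ?L = "lie_g Dh0 g0 q"
    have "Dh0 q (fst (F z)) = (Dh0 q (f0 q) + ?L \<bullet> k0 q) + ?L \<bullet> (xi - k0 q)"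
      by (simp add: F_def closed_loop_def Pair blinfun.add_right lie_g_inner inner_diff_right)
    moreover have "?L \<bullet> (xi - k0 q) \<ge> - (norm ?L * norm (xi - k0 q))"
      using Cauchy_Schwarz_ineq2[of ?L "xi - k0 q"] by linarith
    ultimately show ?thesis
      using composite_barrier_ineq[OF cbf[of q] V_dot[of q xi] _ V_bounds(1)[of xi q]
          gamma_ge pos gpos(1) mu]
      by (simp add: Dh_def h_def F_def Pair)
  qed
  ultimately have "forward_invariant F {z. h z \<ge> 0}"
    by (rule forward_invariant_superlevel_set)
  moreover have "{z. h z \<ge> 0} = {(q, xi). h0 q - (1 / (\<mu> * \<gamma>1)) * (V q xi - \<delta> / \<alpha>) \<ge> 0}"
    by (auto simp: h_def)
  ultimately show ?thesis
    by (simp add: F_def)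
qed

end
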